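(* Let $f:\mathbb{R}^d\to\mathbb{R}$ be twice differentiable with $L$-Lipschitz Hessian. Let $x,g\in\mathbb{R}^d$, let $H\in\mathbb{R}^{d\times d}$ be symmetric, let $M\ge L$, and let $x^+$ be a global minimizer of $y\mapsto \Omega_{M,g,H}(y,x)$. Then $$ f(x)-f(x^+)\;\ge\;\frac{1}{1008\sqrt{M}}\,\mu_M(x^+)+\frac{M\|x-x^+\|^3}{72}-\frac{4\|\nabla f(x)-g\|^{3/2}}{\sqrt{M}}-\frac{73\|\nabla^2 f(x)-H\|^3}{M^2}. $$
   Context: $\|\cdot\|$ is the Euclidean norm on vectors and the spectral norm $\|H\|=\max\{\lambda_{\max}(H),-\lambda_{\min}(H)\}$ on symmetric matrices. The Hessian of $f$ is $L$-Lipschitz means $\|\nabla^2 f(x)-\nabla^2 f(y)\|\le L\|x-y\|$ for all $x,y\in\mathbb{R}^d$. For $M>0$, $g\in\mathbb{R}^d$ and symmetric $H$, $\Omega_{M,g,H}(y,x):=\langle g,y-x\rangle+\frac12\langle H(y-x),y-x\rangle+\frac{M}{6}\|y-x\|^3$. For $c>0$, $\mu_c(x):=\max\Bigl\{\|\nabla f(x)\|^{3/2},\ \frac{(-\lambda_{\min}(\nabla^2 f(x)))^3}{c^{3/2}}\Bigr\}$. *)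

theory Defs
  imports "HOL-Analysis.Analysis"
begin

definition eigenvalues :: "real^'n^'n \<Rightarrow> real set" where
  "eigenvalues A = {l. \<exists>v. v \<noteq> 0 \<and> A *v v = l *\<^sub>R v}"

definition lambda_min :: "real^'n^'n \<Rightarrow> real" where
  "lambda_min A = Min (eigenvalues A)"

definition lambda_max :: "real^'n^'n \<Rightarrow> real" where
  "lambda_max A = Max (eigenvalues A)"

definition symmetric_matrix :: "real^'n^'n \<Rightarrow> bool" where
  "symmetric_matrix A \<longleftrightarrow> transpose A = A"

definition spec_norm :: "real^'n^'n \<Rightarrow> real" where
  "spec_norm A = max (lambda_max A) (- lambda_min A)"

definition Omega :: "real \<Rightarrow> real^'n \<Rightarrow> real^'n^'n \<Rightarrow> real^'n \<Rightarrow> real^'n \<Rightarrow> real" where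
  "Omega M g H y x = g \<bullet> (y - x) + (1/2) * ((H *v (y - x)) \<bullet> (y - x)) + (M / 6) * norm (y - x) ^ 3"

definition mu :: "(real^'n \<Rightarrow> real^'n) \<Rightarrow> (real^'n \<Rightarrow> real^'n^'n) \<Rightarrow> real \<Rightarrow> real^'n \<Rightarrow> real" where
  "mu gradf Hf c x = max (norm (gradf x) powr (3/2)) ((- lambda_min (Hf x)) ^ 3 / c powr (3/2))"

end

theory Submission
  imports Defs
begin

text \<open>Write \<open>h = x\<^sup>+ - x\<close>, \<open>r = \<parallel>h\<parallel>\<close>, \<open>a = \<parallel>\<nabla>f(x) - g\<parallel>\<close> and \<open>\<eta> = \<parallel>\<nabla>\<^sup>2f(x) - H\<parallel>\<close>. A global minimiser of the
  cubic model satisfies \<open>g + H h + (M r/2) h = 0\<close> and \<open>H + (M r/2) I \<succeq> 0\<close>. Combined with the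
  third-order Taylor estimates that a Lipschitz Hessian provides, these conditions give
  \<open>f(x) - f(x\<^sup>+) \<ge> M r\<^sup>3/12 - a r - \<eta> r\<^sup>2/2\<close>, \<open>\<parallel>\<nabla>f(x\<^sup>+)\<parallel> \<le> a + \<eta> r + M r\<^sup>2\<close> and
  \<open>-\<lambda>\<^sub>m\<^sub>i\<^sub>n(\<nabla>\<^sup>2f(x\<^sup>+)) \<le> 3 M r/2 + \<eta>\<close>. The theorem follows from these three estimates by elementary
  inequalities of AM-GM/Young type which absorb the error terms \<open>a r\<close> and \<open>\<eta> r\<^sup>2\<close> into \<open>M r\<^sup>3\<close>,
  \<open>a\<^sup>3\<^sup>/\<^sup>2\<close> and \<open>\<eta>\<^sup>3\<close>. Since the spectral norm is defined through eigenvalues, the Hessians must be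
  symmetric; this is Schwarz's theorem, which follows from the differentiability assumptions.\<close>

section \<open>Spectral bounds for symmetric matrices\<close>

lemma symmetric_matrix_inner_commute:
  fixes A :: "real^'n^'n"
  assumes "symmetric_matrix A"
  shows "(A *v u) \<bullet> w = u \<bullet> (A *v w)"
  by (metis assms dot_lmul_matrix symmetric_matrix_def vector_transpose_matrix)

lemma symmetric_matrix_max_quadratic_eigenvector:
  fixes A :: "real^'n^'n"
  assumes sym: "symmetric_matrix A"
  obtains v where "norm v = 1" "A *v v = (v \<bullet> (A *v v)) *\<^sub>R v"
    "\<And>w. w \<bullet> (A *v w) \<le> (v \<bullet> (A *v v)) * (norm w)\<^sup>2"
proof -
  have "continuous_on (sphere 0 1) (\<lambda>y::real^'n. y \<bullet> (A *v y))"
    by (intro continuous_intros linear_continuous_on matrix_vector_mul_linear)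
  moreover have "sphere (0::real^'n) 1 \<noteq> {}" by simp
  ultimately obtain v where "v \<in> sphere 0 1" and "\<forall>y \<in> sphere 0 1. y \<bullet> (A *v y) \<le> v \<bullet> (A *v v)"
    using continuous_attains_sup[OF compact_sphere] by blast
  then have v: "norm v = 1" and v_max: "\<And>y. norm y = 1 \<Longrightarrow> y \<bullet> (A *v y) \<le> v \<bullet> (A *v v)"
    by auto
  define l where "l = v \<bullet> (A *v v)"
  define Q where "Q w = w \<bullet> (A *v w) - l * (norm w)\<^sup>2" for w
  have Q_le: "Q w \<le> 0" for w
  proof (cases "w = 0")
    case False
    have "((1 / norm w) *\<^sub>R w) \<bullet> (A *v ((1 / norm w) *\<^sub>R w)) \<le> l"
      unfolding l_def using False by (intro v_max) simp
    then show ?thesis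
      using False by (simp add: Q_def matrix_vector_mult_scaleR field_simps power2_eq_square)
  qed (simp add: Q_def)
  (* Q \<le> 0 and Q v = 0, so t \<mapsto> Q (v + t b) is maximal at 0; its derivative there is 2 \<parallel>b\<parallel>\<^sup>2. *)
  define b where "b = A *v v - l *\<^sub>R v"
  have "b \<bullet> b = b \<bullet> (A *v v - l *\<^sub>R v)"
    by (simp only: b_def[symmetric])
  then have vAb: "v \<bullet> (A *v b) = b \<bullet> b + l * (b \<bullet> v)" "b \<bullet> (A *v v) = b \<bullet> b + l * (b \<bullet> v)"
    using symmetric_matrix_inner_commute[OF sym, of b v] inner_commute[of "A *v b" v]
    by (simp_all add: inner_diff_right)
  have expand: "Q (v + t *\<^sub>R b) = Q v + 2 * (b \<bullet> b) * t + Q b * t\<^sup>2" for t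
    unfolding Q_def power2_norm_eq_inner
    by (simp add: matrix_vector_right_distrib matrix_vector_mult_scaleR inner_add_left inner_add_right
        vAb inner_commute algebra_simps power2_eq_square)
  have "((\<lambda>t. Q v + 2 * (b \<bullet> b) * t + Q b * t\<^sup>2) has_real_derivative 2 * (b \<bullet> b)) (at 0)"
    by (auto intro!: derivative_eq_intros)
  then have "((\<lambda>t. Q (v + t *\<^sub>R b)) has_real_derivative 2 * (b \<bullet> b)) (at 0)"
    by (simp only: expand)
  moreover have "\<forall>t. \<bar>0 - t\<bar> < 1 \<longrightarrow> Q (v + t *\<^sub>R b) \<le> Q (v + 0 *\<^sub>R b)"
    using Q_le v by (simp add: Q_def l_def)
  ultimately have "2 * (b \<bullet> b) = 0" by (rule DERIV_local_max[OF _ zero_less_one])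
  then have "A *v v = l *\<^sub>R v" by (simp add: b_def)
  moreover have "w \<bullet> (A *v w) \<le> l * (norm w)\<^sup>2" for w
    using Q_le[of w] by (simp add: Q_def)
  ultimately show thesis using v that unfolding l_def by blast
qed

lemma symmetric_matrix_diff:
  "symmetric_matrix A \<Longrightarrow> symmetric_matrix B \<Longrightarrow> symmetric_matrix (A - B)"
  by (simp add: symmetric_matrix_def transpose_def vec_eq_iff)

lemma symmetric_matrix_uminus: "symmetric_matrix A \<Longrightarrow> symmetric_matrix (- A)"
  by (simp add: symmetric_matrix_def transpose_def vec_eq_iff)

lemma uminus_matrix_vector_mult: "(- A) *v w = - (A *v w)"
  for A :: "real^'n^'m"
  by (simp add: matrix_vector_mult_def vec_eq_iff sum_negf)

lemma finite_eigenvalues: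
  fixes A :: "real^'n^'n"
  assumes sym: "symmetric_matrix A"
  shows "finite (eigenvalues A)"
proof -
  define ev where "ev l = (SOME v. v \<noteq> 0 \<and> A *v v = l *\<^sub>R v)" for l
  have ev: "ev l \<noteq> 0 \<and> A *v ev l = l *\<^sub>R ev l" if "l \<in> eigenvalues A" for l
    using that unfolding eigenvalues_def ev_def by (rule CollectE) (rule someI_ex)
  have orth: "ev l \<bullet> ev l' = 0"
    if "l \<in> eigenvalues A" "l' \<in> eigenvalues A" "l \<noteq> l'" for l l'
  proof -
    have "l * (ev l \<bullet> ev l') = (A *v ev l) \<bullet> ev l'" using ev[OF that(1)] by simp
    also have "\<dots> = ev l \<bullet> (A *v ev l')" by (rule symmetric_matrix_inner_commute[OF sym])
    also have "\<dots> = l' * (ev l \<bullet> ev l')" using ev[OF that(2)] by simp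
    finally show ?thesis using that(3) by simp
  qed
  then have inj: "inj_on ev (eigenvalues A)"
    by (metis ev inj_onI inner_eq_zero_iff)
  have "pairwise orthogonal (ev ` eigenvalues A)"
    unfolding pairwise_def orthogonal_def using orth by auto
  moreover have "0 \<notin> ev ` eigenvalues A" using ev by auto
  ultimately have "independent (ev ` eigenvalues A)" by (rule pairwise_orthogonal_independent)
  then have "finite (ev ` eigenvalues A)" using independent_bound by blast
  then show ?thesis using inj finite_imageD by blast
qed

lemma quadratic_le_lambda_max:
  fixes A :: "real^'n^'n"
  assumes sym: "symmetric_matrix A"
  shows "w \<bullet> (A *v w) \<le> lambda_max A * (norm w)\<^sup>2"
proof -
  obtain v where "norm v = 1" "A *v v = (v \<bullet> (A *v v)) *\<^sub>R v"
    and v_max: "w \<bullet> (A *v w) \<le> (v \<bullet> (A *v v)) * (norm w)\<^sup>2"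
    using symmetric_matrix_max_quadratic_eigenvector[OF sym] by metis
  then have "v \<bullet> (A *v v) \<in> eigenvalues A"
    unfolding eigenvalues_def by (metis (mono_tags, lifting) mem_Collect_eq norm_zero zero_neq_one)
  then have "v \<bullet> (A *v v) \<le> lambda_max A"
    unfolding lambda_max_def using finite_eigenvalues[OF sym] by simp
  with v_max show ?thesis by (meson mult_right_mono order_trans zero_le_power2)
qed

lemma lambda_min_le_quadratic:
  fixes A :: "real^'n^'n"
  assumes sym: "symmetric_matrix A"
  shows "lambda_min A * (norm w)\<^sup>2 \<le> w \<bullet> (A *v w)"
proof -
  obtain u where "norm u = 1" "(- A) *v u = (u \<bullet> ((- A) *v u)) *\<^sub>R u"
    and u_max: "w \<bullet> ((- A) *v w) \<le> (u \<bullet> ((- A) *v u)) * (norm w)\<^sup>2"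
    using symmetric_matrix_max_quadratic_eigenvector[OF symmetric_matrix_uminus[OF sym]] by metis
  then have "u \<bullet> (A *v u) \<in> eigenvalues A"
    unfolding eigenvalues_def by (auto simp: uminus_matrix_vector_mult intro!: exI[of _ u])
  then have "lambda_min A \<le> u \<bullet> (A *v u)"
    unfolding lambda_min_def using finite_eigenvalues[OF sym] by simp
  moreover have "(u \<bullet> (A *v u)) * (norm w)\<^sup>2 \<le> w \<bullet> (A *v w)"
    using u_max by (simp add: uminus_matrix_vector_mult)
  ultimately show ?thesis by (meson mult_right_mono order_trans zero_le_power2)
qed

lemma lambda_min_in_eigenvalues:
  fixes A :: "real^'n^'n"
  assumes sym: "symmetric_matrix A"
  shows "lambda_min A \<in> eigenvalues A"
proof -
  obtain v where "norm v = 1" "A *v v = (v \<bullet> (A *v v)) *\<^sub>R v"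
    using symmetric_matrix_max_quadratic_eigenvector[OF sym] by metis
  then have "eigenvalues A \<noteq> {}"
    unfolding eigenvalues_def by (metis (mono_tags, lifting) empty_iff mem_Collect_eq norm_zero zero_neq_one)
  then show ?thesis unfolding lambda_min_def using finite_eigenvalues[OF sym] by (rule Min_in[rotated])
qed

lemma spec_norm_nonneg:
  fixes A :: "real^'n^'n"
  assumes sym: "symmetric_matrix A"
  shows "0 \<le> spec_norm A"
proof -
  have "lambda_min A \<le> lambda_max A"
    unfolding lambda_max_def
    using finite_eigenvalues[OF sym] lambda_min_in_eigenvalues[OF sym] by (rule Max_ge)
  then show ?thesis unfolding spec_norm_def by linarith
qed

lemma abs_quadratic_le_spec_norm:
  fixes A :: "real^'n^'n"
  assumes sym: "symmetric_matrix A"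
  shows "\<bar>w \<bullet> (A *v w)\<bar> \<le> spec_norm A * (norm w)\<^sup>2"
proof -
  have "lambda_max A * (norm w)\<^sup>2 \<le> spec_norm A * (norm w)\<^sup>2"
    "- lambda_min A * (norm w)\<^sup>2 \<le> spec_norm A * (norm w)\<^sup>2"
    unfolding spec_norm_def by (intro mult_right_mono; simp)+
  then show ?thesis
    using lambda_min_le_quadratic[OF sym, of w] quadratic_le_lambda_max[OF sym, of w] by auto
qed

lemma norm_matrix_vector_mult_le_spec_norm:
  fixes A :: "real^'n^'n"
  assumes sym: "symmetric_matrix A"
  shows "norm (A *v u) \<le> spec_norm A * norm u"
proof (cases "A *v u = 0")
  case True
  then show ?thesis using spec_norm_nonneg[OF sym] by simp
next
  case False
  define S where "S = spec_norm A"
  define w where "w = (norm u / norm (A *v u)) *\<^sub>R (A *v u)"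
  have norm_w: "norm w = norm u" using False unfolding w_def by simp
  have polarization: "4 * ((A *v u) \<bullet> w) = (u + w) \<bullet> (A *v (u + w)) - (u - w) \<bullet> (A *v (u - w))"
    using symmetric_matrix_inner_commute[OF sym, of w u] symmetric_matrix_inner_commute[OF sym, of u w]
    by (simp add: algebra_simps inner_add_left inner_add_right inner_diff_left inner_diff_right inner_commute)
  have "(u + w) \<bullet> (A *v (u + w)) \<le> S * (norm (u + w))\<^sup>2"
    using abs_quadratic_le_spec_norm[OF sym, of "u + w"] unfolding S_def by linarith
  moreover have "- ((u - w) \<bullet> (A *v (u - w))) \<le> S * (norm (u - w))\<^sup>2"
    using abs_quadratic_le_spec_norm[OF sym, of "u - w"] unfolding S_def by linarith
  moreover have "(norm (u + w))\<^sup>2 + (norm (u - w))\<^sup>2 = 2 * (norm u)\<^sup>2 + 2 * (norm w)\<^sup>2"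
    unfolding power2_norm_eq_inner
    by (simp add: algebra_simps inner_add_left inner_add_right inner_diff_left inner_diff_right inner_commute)
  then have "S * (norm (u + w))\<^sup>2 + S * (norm (u - w))\<^sup>2 = 4 * (S * (norm u)\<^sup>2)"
    unfolding distrib_left[symmetric] norm_w by simp
  ultimately have "4 * ((A *v u) \<bullet> w) \<le> 4 * (S * (norm u)\<^sup>2)"
    unfolding polarization by linarith
  moreover have "(A *v u) \<bullet> w = norm u * norm (A *v u)"
    using False unfolding w_def by (simp add: power2_norm_eq_inner[symmetric] power2_eq_square)
  ultimately have "norm u * norm (A *v u) \<le> norm u * (S * norm u)"
    by (simp add: power2_eq_square mult_ac)
  moreover have "norm u > 0" using False by auto
  ultimately show ?thesis unfolding S_def by simp
qed

section \<open>The cubic model\<close>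

lemma has_real_derivative_along_line:
  fixes F :: "'a::real_normed_vector \<Rightarrow> real"
  assumes "(F has_derivative F') (at (p + t *\<^sub>R w))"
  shows "((\<lambda>s. F (p + s *\<^sub>R w)) has_real_derivative F' w) (at t)"
proof -
  have "((\<lambda>s. p + s *\<^sub>R w) has_derivative (\<lambda>s. s *\<^sub>R w)) (at t)"
    by (auto intro!: derivative_eq_intros)
  from has_derivative_compose[OF this assms]
  have "((\<lambda>s. F (p + s *\<^sub>R w)) has_derivative (\<lambda>s. F' (s *\<^sub>R w))) (at t)"
    by (simp add: o_def)
  moreover have "(\<lambda>s. F' (s *\<^sub>R w)) = (*) (F' w)"
    using linear_scale[OF has_derivative_linear[OF assms]] by (auto simp: fun_eq_iff mult.commute)
  ultimately show ?thesis unfolding has_field_derivative_def by simp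
qed

definition cubic_model :: "real \<Rightarrow> real^'n \<Rightarrow> real^'n^'n \<Rightarrow> real^'n \<Rightarrow> real" where
  "cubic_model M g H v = g \<bullet> v + 1/2 * ((H *v v) \<bullet> v) + M / 6 * norm v ^ 3"

lemma Omega_eq_cubic_model: "Omega M g H y x = cubic_model M g H (y - x)"
  by (simp add: Omega_def cubic_model_def)

lemma has_derivative_norm_cube:
  "((\<lambda>v::'a::real_inner. norm v ^ 3) has_derivative (\<lambda>k. 3 * norm h * (h \<bullet> k))) (at h)"
proof (cases "h = 0")
  case True
  have "((\<lambda>y::'a. (norm y)\<^sup>2) \<longlongrightarrow> 0) (at 0)"
    by (auto intro!: tendsto_eq_intros)
  then have "((\<lambda>y::'a. norm (norm y ^ 3 - norm (0::'a) ^ 3 - 0) / norm (y - 0)) \<longlongrightarrow> 0) (at 0)"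
    by (rule Lim_transform_eventually) (auto simp: eventually_at_filter power2_eq_square power3_eq_cube)
  with True show ?thesis by (simp add: has_derivative_iff_norm)
next
  case False
  have "((\<lambda>v::'a. norm v ^ 3) has_derivative (\<lambda>k. of_nat 3 * (k \<bullet> sgn h) * norm h ^ (3 - 1))) (at h)"
    by (rule has_derivative_power[OF has_derivative_norm[OF False]])
  moreover have "(\<lambda>k. of_nat 3 * (k \<bullet> sgn h) * norm h ^ (3 - 1)) = (\<lambda>k. 3 * norm h * (h \<bullet> k))"
    using False by (auto simp: fun_eq_iff sgn_div_norm inner_commute power2_eq_square)
  ultimately show ?thesis by simp
qed

lemma has_derivative_cubic_model:
  fixes H :: "real^'n^'n"
  assumes sym: "symmetric_matrix H"
  shows "(cubic_model M g H has_derivative (\<lambda>k. (g + H *v h + (M * norm h / 2) *\<^sub>R h) \<bullet> k)) (at h)"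
proof -
  have "(cubic_model M g H has_derivative
          (\<lambda>k. g \<bullet> k + 1/2 * ((H *v h) \<bullet> k + (H *v k) \<bullet> h) + M / 6 * (3 * norm h * (h \<bullet> k)))) (at h)"
    unfolding cubic_model_def[abs_def]
    by (intro has_derivative_add has_derivative_mult_right has_derivative_inner_right
        has_derivative_inner has_derivative_norm_cube has_derivative_ident
        bounded_linear.has_derivative[OF matrix_vector_mul_bounded_linear])
  moreover have "(H *v k) \<bullet> h = (H *v h) \<bullet> k" for k
    using symmetric_matrix_inner_commute[OF sym, of k h] by (simp add: inner_commute)
  ultimately show ?thesis
    by (simp add: inner_add_left algebra_simps)
qed

lemma cubic_model_minimizer_stationary:
  assumes sym: "symmetric_matrix H" and min: "\<And>v. cubic_model M g H h \<le> cubic_model M g H v"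
  shows "g + H *v h + (M * norm h / 2) *\<^sub>R h = 0"
proof -
  define G where "G = g + H *v h + (M * norm h / 2) *\<^sub>R h"
  have "((\<lambda>t. cubic_model M g H (h + t *\<^sub>R G)) has_real_derivative G \<bullet> G) (at 0)"
    unfolding G_def by (rule has_real_derivative_along_line) (simp add: has_derivative_cubic_model[OF sym])
  moreover have "\<forall>t. \<bar>0 - t\<bar> < 1 \<longrightarrow> cubic_model M g H (h + 0 *\<^sub>R G) \<le> cubic_model M g H (h + t *\<^sub>R G)"
    using min by simp
  ultimately have "G \<bullet> G = 0" by (rule DERIV_local_min[OF _ zero_less_one])
  then show ?thesis unfolding G_def by simp
qed

lemma cubic_model_minimizer_at_zero:
  assumes sym: "symmetric_matrix H" and min: "\<And>v. cubic_model M g H 0 \<le> cubic_model M g H v"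
  shows "0 \<le> z \<bullet> (H *v z)"
proof -
  have "g = 0"
    using cubic_model_minimizer_stationary[OF sym min] by simp
  have "((\<lambda>t. z \<bullet> (H *v z) / 2 + M * t / 6 * norm z ^ 3) \<longlongrightarrow> z \<bullet> (H *v z) / 2) (at_right 0)"
    by (auto intro!: tendsto_eq_intros)
  moreover have "\<forall>\<^sub>F t in at_right 0. 0 \<le> z \<bullet> (H *v z) / 2 + M * t / 6 * norm z ^ 3"
  proof (rule eventually_at_rightI[of 0 1])
    fix t :: real assume "t \<in> {0<..<1}"
    then have "0 < t" by simp
    have "0 \<le> cubic_model M g H (t *\<^sub>R z)"
      using min[of "t *\<^sub>R z"] by (simp add: cubic_model_def)
    also have "cubic_model M g H (t *\<^sub>R z) = t\<^sup>2 * (z \<bullet> (H *v z) / 2 + M * t / 6 * norm z ^ 3)"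
      using \<open>g = 0\<close> \<open>0 < t\<close> inner_commute[of "H *v z" z]
      by (simp add: cubic_model_def matrix_vector_mult_scaleR power2_eq_square power3_eq_cube algebra_simps)
    finally show "0 \<le> z \<bullet> (H *v z) / 2 + M * t / 6 * norm z ^ 3"
      using \<open>0 < t\<close> by (simp add: zero_le_mult_iff)
  qed simp
  ultimately have "0 \<le> z \<bullet> (H *v z) / 2" by (rule tendsto_lowerbound) simp
  then show ?thesis by simp
qed

lemma cubic_model_minimizer_off_hyperplane:
  assumes sym: "symmetric_matrix H" and min: "\<And>v. cubic_model M g H h \<le> cubic_model M g H v"
    and "z \<bullet> h \<noteq> 0"
  shows "0 \<le> z \<bullet> (H *v z) + M * norm h / 2 * (norm z)\<^sup>2"
proof -
  define \<tau> where "\<tau> = M * norm h / 2"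
  have "g = (g + H *v h + \<tau> *\<^sub>R h) - H *v h - \<tau> *\<^sub>R h" by simp
  then have g_eq: "g = - (H *v h) - \<tau> *\<^sub>R h"
    using cubic_model_minimizer_stationary[OF sym min] unfolding \<tau>_def by simp
  (* h + s z has the same norm as h, so the cubic terms cancel and minimality becomes quadratic in s. *)
  define s where "s = - 2 * (h \<bullet> z) / (norm z)\<^sup>2"
  have "z \<noteq> 0" using \<open>z \<bullet> h \<noteq> 0\<close> by auto
  then have sz: "s * (norm z)\<^sup>2 = - 2 * (h \<bullet> z)" unfolding s_def by simp
  have "s \<noteq> 0" using \<open>z \<bullet> h \<noteq> 0\<close> \<open>z \<noteq> 0\<close> unfolding s_def by (simp add: inner_commute)
  have "(norm (h + s *\<^sub>R z))\<^sup>2 = (norm h)\<^sup>2 + s * (2 * (h \<bullet> z) + s * (norm z)\<^sup>2)"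
    unfolding power2_norm_eq_inner
    by (simp add: inner_add_left inner_add_right inner_commute algebra_simps power2_eq_square)
  then have reflected_norm: "norm (h + s *\<^sub>R z) = norm h"
    using sz by (simp add: power2_eq_iff_nonneg)
  have "cubic_model M g H (h + s *\<^sub>R z) - cubic_model M g H h
        = s * (g \<bullet> z) + s * ((H *v h) \<bullet> z) + s\<^sup>2 / 2 * (z \<bullet> (H *v z))"
    using reflected_norm symmetric_matrix_inner_commute[OF sym, of z h] unfolding cubic_model_def
    by (simp add: inner_add_left inner_add_right inner_commute matrix_vector_mult_scaleR
        algebra_simps power2_eq_square)
  also have "s * (g \<bullet> z) + s * ((H *v h) \<bullet> z) = s\<^sup>2 / 2 * (\<tau> * (norm z)\<^sup>2)"
    using sz unfolding g_eq by (simp add: inner_diff_left inner_commute algebra_simps power2_eq_square)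
  finally have "0 \<le> s\<^sup>2 / 2 * (z \<bullet> (H *v z) + \<tau> * (norm z)\<^sup>2)"
    using min[of "h + s *\<^sub>R z"] by (simp add: algebra_simps)
  then show ?thesis using \<open>s \<noteq> 0\<close> unfolding \<tau>_def by (simp add: zero_le_mult_iff)
qed

lemma cubic_model_minimizer_second_order:
  assumes sym: "symmetric_matrix H" and min: "\<And>v. cubic_model M g H h \<le> cubic_model M g H v"
  shows "0 \<le> z \<bullet> (H *v z) + M * norm h / 2 * (norm z)\<^sup>2"
proof -
  define K where "K z = z \<bullet> (H *v z) + M * norm h / 2 * (norm z)\<^sup>2" for z
  consider "h = 0" | "z \<bullet> h \<noteq> 0" | "h \<noteq> 0" "z \<bullet> h = 0" by blast
  then have "0 \<le> K z"
  proof cases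
    case 1
    have "0 \<le> z \<bullet> (H *v z)"
      by (rule cubic_model_minimizer_at_zero[OF sym]) (use min 1 in simp)
    then show ?thesis using 1 by (simp add: K_def)
  next
    case 2
    then show ?thesis
      unfolding K_def by (rule cubic_model_minimizer_off_hyperplane[OF sym min])
  next
    case 3
    have "isCont K z" unfolding K_def
      by (intro continuous_intros linear_continuous_at matrix_vector_mul_bounded_linear)
    then have "((\<lambda>e. K (z + e *\<^sub>R h)) \<longlongrightarrow> K z) (at 0)"
      by (rule isCont_tendsto_compose) (auto intro!: tendsto_eq_intros)
    moreover have "0 \<le> K (z + e *\<^sub>R h)" if "e \<noteq> 0" for e
    proof -
      have "(z + e *\<^sub>R h) \<bullet> h \<noteq> 0" using 3 that by (simp add: inner_add_left)
      then show ?thesis unfolding K_def by (rule cubic_model_minimizer_off_hyperplane[OF sym min])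
    qed
    then have "\<forall>\<^sub>F e in at 0. 0 \<le> K (z + e *\<^sub>R h)"
      by (simp add: eventually_at_filter always_eventually)
    ultimately show ?thesis by (rule tendsto_lowerbound) simp
  qed
  then show ?thesis unfolding K_def .
qed

section \<open>Functions with Lipschitz Hessian\<close>

locale lipschitz_hessian =
  fixes f :: "real^'n \<Rightarrow> real" and gradf :: "real^'n \<Rightarrow> real^'n"
    and Hf :: "real^'n \<Rightarrow> real^'n^'n" and L :: real
  assumes has_derivative_f: "\<And>y. (f has_derivative (\<lambda>h. gradf y \<bullet> h)) (at y)"
    and has_derivative_gradf: "\<And>y. (gradf has_derivative (\<lambda>h. Hf y *v h)) (at y)"
    and hessian_lipschitz: "\<And>y z. spec_norm (Hf y - Hf z) \<le> L * norm (y - z)"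
begin

lemma second_difference_approx:
  assumes approx: "\<And>y. norm (y - x) < d \<Longrightarrow> norm (gradf y - gradf x - A *v (y - x)) \<le> e * norm (y - x)"
    and "0 < s" "s * (norm u + norm v) < d" "0 \<le> e"
  shows "\<bar>f (x + s *\<^sub>R v + s *\<^sub>R u) - f (x + s *\<^sub>R u) - f (x + s *\<^sub>R v) + f x - s\<^sup>2 * ((A *v v) \<bullet> u)\<bar>
          \<le> 2 * e * s\<^sup>2 * (norm u + norm v) * norm u"
proof -
  define B where "B = 2 * e * s * (norm u + norm v) * norm u"
  define G where "G t = f (x + s *\<^sub>R v + t *\<^sub>R u) - f (x + t *\<^sub>R u) - t * s * ((A *v v) \<bullet> u)" for t
  define G' where "G' t = (gradf (x + s *\<^sub>R v + t *\<^sub>R u) - gradf (x + t *\<^sub>R u)) \<bullet> u - s * ((A *v v) \<bullet> u)" for t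
  have "(G has_real_derivative G' t) (at t)" for t
    unfolding G_def G'_def inner_diff_left
    by (intro DERIV_diff has_real_derivative_along_line has_derivative_f)
      (auto intro!: derivative_eq_intros)
  moreover have "\<bar>G' t\<bar> \<le> B" if t: "t \<in> {0..s}" for t
  proof -
    have err_bound: "norm (gradf y - gradf x - A *v (y - x)) \<le> e * (s * (norm u + norm v))"
      if "norm (y - x) \<le> s * (norm u + norm v)" for y
      using approx[of y] that assms(3,4) by (meson le_less_trans mult_left_mono order_trans)
    define E1 where "E1 = gradf (x + s *\<^sub>R v + t *\<^sub>R u) - gradf x - A *v (s *\<^sub>R v + t *\<^sub>R u)"
    define E2 where "E2 = gradf (x + t *\<^sub>R u) - gradf x - A *v (t *\<^sub>R u)"
    have "norm (s *\<^sub>R v + t *\<^sub>R u) \<le> s * (norm u + norm v)" "norm (t *\<^sub>R u) \<le> s * (norm u + norm v)"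
      using t assms(2) norm_triangle_ineq[of "s *\<^sub>R v" "t *\<^sub>R u"] mult_right_mono[of t s "norm u"]
      by (auto simp: algebra_simps intro: order_trans)
    then have E: "norm E1 + norm E2 \<le> 2 * e * s * (norm u + norm v)"
      using err_bound[of "x + s *\<^sub>R v + t *\<^sub>R u"] err_bound[of "x + t *\<^sub>R u"]
      unfolding E1_def E2_def by (simp add: add.assoc)
    have "G' t = (E1 - E2) \<bullet> u"
      unfolding G'_def E1_def E2_def by (simp add: algebra_simps matrix_vector_mult_scaleR inner_diff_left)
    then have "\<bar>G' t\<bar> \<le> norm (E1 - E2) * norm u"
      by (simp add: Cauchy_Schwarz_ineq2)
    also have "\<dots> \<le> (norm E1 + norm E2) * norm u"
      by (intro mult_right_mono norm_triangle_ineq4) simp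
    also have "\<dots> \<le> B"
      unfolding B_def using E by (intro mult_right_mono) auto
    finally show ?thesis .
  qed
  ultimately have "norm (G s - G 0) \<le> B * norm (s - 0)"
    using assms(2) by (intro field_differentiable_bound[of "{0..s}"]) (auto intro: has_field_derivative_at_within)
  then show ?thesis
    using assms(2) unfolding G_def B_def by (simp add: algebra_simps power2_eq_square)
qed

lemma symmetric_hessian: "symmetric_matrix (Hf x)"
proof -
  define A where "A = Hf x"
  (* Schwarz: the second difference of f in the directions e\<^sub>i, e\<^sub>j approximates both A\<^sub>i\<^sub>j and A\<^sub>j\<^sub>i. *)
  have "(A *v axis j 1) \<bullet> axis i 1 - (A *v axis i 1) \<bullet> axis j 1 = 0" for i j
  proof (rule dense_eq0_I)
    fix e :: real assume "0 < e"
    obtain d where "d > 0"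
      and approx: "\<And>y. norm (y - x) < d \<Longrightarrow> norm (gradf y - gradf x - A *v (y - x)) \<le> e / 8 * norm (y - x)"
      using has_derivative_gradf[of x] \<open>0 < e\<close> unfolding has_derivative_at_alt A_def
      by (metis divide_pos_pos zero_less_numeral)
    define s where "s = d / 4"
    have s: "0 < s" "s * (norm (axis k (1::real)) + norm (axis l (1::real))) < d" for k l :: 'n
      using \<open>d > 0\<close> by (simp_all add: s_def)
    define \<Delta> where "\<Delta> = f (x + s *\<^sub>R axis i 1 + s *\<^sub>R axis j 1) - f (x + s *\<^sub>R axis i 1)
      - f (x + s *\<^sub>R axis j 1) + f x"
    have "\<bar>\<Delta> - s\<^sup>2 * ((A *v axis j 1) \<bullet> axis i 1)\<bar> \<le> e / 2 * s\<^sup>2"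
      using second_difference_approx[OF approx s(1) s(2)[of i j]] \<open>0 < e\<close>
      by (simp add: \<Delta>_def add_ac)
    moreover have "\<bar>\<Delta> - s\<^sup>2 * ((A *v axis i 1) \<bullet> axis j 1)\<bar> \<le> e / 2 * s\<^sup>2"
      using second_difference_approx[OF approx s(1) s(2)[of j i]] \<open>0 < e\<close>
      by (simp add: \<Delta>_def algebra_simps)
    ultimately have "\<bar>s\<^sup>2 * ((A *v axis j 1) \<bullet> axis i 1 - (A *v axis i 1) \<bullet> axis j 1)\<bar> \<le> s\<^sup>2 * e"
      unfolding right_diff_distrib abs_le_iff
      using field_sum_of_halves[of "s\<^sup>2 * e"] by (simp add: mult.commute)
    then show "\<bar>(A *v axis j 1) \<bullet> axis i 1 - (A *v axis i 1) \<bullet> axis j 1\<bar> \<le> e"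
      using s by (simp add: abs_mult)
  qed
  then have "A $ j $ i = A $ i $ j" for i j
    by (simp add: matrix_vector_mult_basis column_def inner_axis inner_axis')
  then show ?thesis unfolding symmetric_matrix_def A_def by (simp add: transpose_def vec_eq_iff)
qed

lemma lipschitz_const_nonneg: "0 \<le> L"
proof -
  obtain i :: 'n where True by simp
  have "0 \<le> spec_norm (Hf (axis i 1) - Hf 0)"
    by (intro spec_norm_nonneg symmetric_matrix_diff symmetric_hessian)
  also have "\<dots> \<le> L * norm (axis i (1::real) - 0)" by (rule hessian_lipschitz)
  finally show ?thesis by simp
qed

lemma norm_hessian_diff_mult_le: "norm ((Hf y - Hf z) *v v) \<le> L * norm (y - z) * norm v"
proof -
  have "norm ((Hf y - Hf z) *v v) \<le> spec_norm (Hf y - Hf z) * norm v"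
    by (intro norm_matrix_vector_mult_le_spec_norm symmetric_matrix_diff symmetric_hessian)
  also have "\<dots> \<le> L * norm (y - z) * norm v"
    using hessian_lipschitz[of y z] by (simp add: mult_right_mono)
  finally show ?thesis .
qed

lemma gradient_taylor_bound: "norm (gradf (x + h) - gradf x - Hf x *v h) \<le> L / 2 * (norm h)\<^sup>2"
proof -
  define D where "D = gradf (x + h) - gradf x - Hf x *v h"
  (* Pairing the remainder D with itself reduces the vector estimate to a scalar monotonicity argument. *)
  define C where "C = norm D * L * (norm h)\<^sup>2"
  define \<phi> where "\<phi> t = D \<bullet> gradf (x + t *\<^sub>R h) - t * (D \<bullet> (Hf x *v h)) - C * t\<^sup>2 / 2" for t
  define \<phi>' where "\<phi>' t = D \<bullet> (Hf (x + t *\<^sub>R h) *v h) - D \<bullet> (Hf x *v h) - C * t" for t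
  have "\<phi> 1 \<le> \<phi> 0"
  proof (rule deriv_nonpos_imp_antimono[of 0 1 \<phi> \<phi>'])
    fix t :: real assume t: "t \<in> {0..1}"
    have "((\<lambda>s. D \<bullet> gradf (x + s *\<^sub>R h)) has_real_derivative D \<bullet> (Hf (x + t *\<^sub>R h) *v h)) (at t)"
      by (rule has_real_derivative_along_line[where F="\<lambda>y. D \<bullet> gradf y"])
        (intro has_derivative_inner_right has_derivative_gradf)
    then show "(\<phi> has_real_derivative \<phi>' t) (at t)" unfolding \<phi>_def[abs_def] \<phi>'_def
      by (auto intro!: derivative_eq_intros simp: power2_eq_square)
    have "D \<bullet> (Hf (x + t *\<^sub>R h) *v h) - D \<bullet> (Hf x *v h) = D \<bullet> ((Hf (x + t *\<^sub>R h) - Hf x) *v h)"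
      by (simp add: matrix_vector_mult_diff_rdistrib inner_diff_right)
    also have "\<dots> \<le> norm D * norm ((Hf (x + t *\<^sub>R h) - Hf x) *v h)" by (rule norm_cauchy_schwarz)
    also have "\<dots> \<le> norm D * (L * norm (x + t *\<^sub>R h - x) * norm h)"
      by (intro mult_left_mono norm_hessian_diff_mult_le) simp
    also have "\<dots> = C * t" using t unfolding C_def by (simp add: power2_eq_square)
    finally show "\<phi>' t \<le> 0" unfolding \<phi>'_def by simp
  qed simp
  then have "(norm D)\<^sup>2 \<le> C / 2"
    unfolding \<phi>_def by (simp add: D_def power2_norm_eq_inner inner_diff_right algebra_simps)
  then have "norm D * norm D \<le> norm D * (L / 2 * (norm h)\<^sup>2)"
    unfolding C_def by (simp add: power2_eq_square)
  then show ?thesis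
    using lipschitz_const_nonneg unfolding D_def[symmetric] by (cases "D = 0") (auto simp: mult_le_cancel_left)
qed

lemma taylor_upper_bound:
  "f (x + h) \<le> f x + gradf x \<bullet> h + 1/2 * (h \<bullet> (Hf x *v h)) + L / 6 * norm h ^ 3"
proof -
  define \<phi> where "\<phi> t = f (x + t *\<^sub>R h) - t * (gradf x \<bullet> h) - t\<^sup>2 / 2 * (h \<bullet> (Hf x *v h))
    - L * t ^ 3 * norm h ^ 3 / 6" for t
  define \<phi>' where "\<phi>' t = gradf (x + t *\<^sub>R h) \<bullet> h - gradf x \<bullet> h - t * (h \<bullet> (Hf x *v h))
    - L * t\<^sup>2 * norm h ^ 3 / 2" for t
  have "\<phi> 1 \<le> \<phi> 0"
  proof (rule deriv_nonpos_imp_antimono[of 0 1 \<phi> \<phi>'])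
    fix t :: real assume t: "t \<in> {0..1}"
    have "((\<lambda>s. f (x + s *\<^sub>R h)) has_real_derivative gradf (x + t *\<^sub>R h) \<bullet> h) (at t)"
      by (rule has_real_derivative_along_line[where F=f]) (rule has_derivative_f)
    then show "(\<phi> has_real_derivative \<phi>' t) (at t)" unfolding \<phi>_def[abs_def] \<phi>'_def
      by (auto intro!: derivative_eq_intros simp: power2_eq_square power3_eq_cube algebra_simps)
    have "gradf (x + t *\<^sub>R h) \<bullet> h - gradf x \<bullet> h - t * (h \<bullet> (Hf x *v h))
          = (gradf (x + t *\<^sub>R h) - gradf x - Hf x *v (t *\<^sub>R h)) \<bullet> h"
      by (simp add: inner_diff_left inner_diff_right matrix_vector_mult_scaleR inner_commute)
    also have "\<dots> \<le> norm (gradf (x + t *\<^sub>R h) - gradf x - Hf x *v (t *\<^sub>R h)) * norm h"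
      by (rule norm_cauchy_schwarz)
    also have "\<dots> \<le> L / 2 * (norm (t *\<^sub>R h))\<^sup>2 * norm h"
      by (intro mult_right_mono gradient_taylor_bound) simp
    also have "\<dots> = L * t\<^sup>2 * norm h ^ 3 / 2" using t by (simp add: power2_eq_square power3_eq_cube)
    finally show "\<phi>' t \<le> 0" unfolding \<phi>'_def by simp
  qed simp
  then show ?thesis unfolding \<phi>_def by simp
qed

lemma cubic_step_decrease:
  assumes "L \<le> M" and H_sym: "symmetric_matrix H"
    and stationary: "g + H *v h + (M * norm h / 2) *\<^sub>R h = 0"
    and second_order: "0 \<le> h \<bullet> (H *v h) + M * norm h / 2 * (norm h)\<^sup>2"
  shows "M * norm h ^ 3 / 12 - norm (gradf x - g) * norm h - spec_norm (Hf x - H) * (norm h)\<^sup>2 / 2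
           \<le> f x - f (x + h)"
proof -
  have "gradf x \<bullet> h = g \<bullet> h + (gradf x - g) \<bullet> h"
    by (simp add: inner_diff_left)
  moreover have "h \<bullet> (Hf x *v h) = h \<bullet> (H *v h) + h \<bullet> ((Hf x - H) *v h)"
    by (simp add: matrix_vector_mult_diff_rdistrib inner_diff_right)
  moreover have "g \<bullet> h + h \<bullet> (H *v h) + M * norm h ^ 3 / 2 = 0"
    using arg_cong[OF stationary, of "\<lambda>v. v \<bullet> h"]
    by (simp add: inner_add_left inner_commute power2_norm_eq_inner[symmetric] power2_eq_square
        power3_eq_cube algebra_simps)
  moreover have "0 \<le> h \<bullet> (H *v h) + M * norm h ^ 3 / 2"
    using second_order by (simp add: power2_eq_square power3_eq_cube algebra_simps)
  moreover have "(gradf x - g) \<bullet> h \<le> norm (gradf x - g) * norm h"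
    by (rule norm_cauchy_schwarz)
  moreover have "h \<bullet> ((Hf x - H) *v h) \<le> spec_norm (Hf x - H) * (norm h)\<^sup>2"
    using abs_quadratic_le_spec_norm[OF symmetric_matrix_diff[OF symmetric_hessian[of x] H_sym], of h]
    by linarith
  moreover have "L / 6 * norm h ^ 3 \<le> M / 6 * norm h ^ 3"
    using \<open>L \<le> M\<close> by (simp add: mult_right_mono)
  ultimately show ?thesis
    using taylor_upper_bound[of x h] by linarith
qed

lemma cubic_step_gradient:
  assumes "L \<le> M" and H_sym: "symmetric_matrix H"
    and stationary: "g + H *v h + (M * norm h / 2) *\<^sub>R h = 0"
  shows "norm (gradf (x + h)) \<le> norm (gradf x - g) + spec_norm (Hf x - H) * norm h + M * (norm h)\<^sup>2"
proof -
  define e where "e = gradf (x + h) - gradf x - Hf x *v h"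
  have "gradf (x + h) = gradf (x + h) - (g + H *v h + (M * norm h / 2) *\<^sub>R h)"
    using stationary by simp
  also have "\<dots> = (gradf x - g) + ((Hf x - H) *v h - (M * norm h / 2) *\<^sub>R h + e)"
    unfolding e_def by (simp add: algebra_simps)
  finally have "norm (gradf (x + h))
      \<le> norm (gradf x - g) + (norm ((Hf x - H) *v h) + norm ((M * norm h / 2) *\<^sub>R h) + norm e)"
    by (simp only:) (intro order_trans[OF norm_triangle_ineq] add_left_mono add_right_mono
        norm_triangle_ineq4)
  moreover have "norm ((Hf x - H) *v h) \<le> spec_norm (Hf x - H) * norm h"
    by (intro norm_matrix_vector_mult_le_spec_norm symmetric_matrix_diff symmetric_hessian H_sym)
  moreover have "norm ((M * norm h / 2) *\<^sub>R h) = M / 2 * (norm h)\<^sup>2"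
    using \<open>L \<le> M\<close> lipschitz_const_nonneg by (simp add: power2_eq_square)
  moreover have "norm e \<le> M / 2 * (norm h)\<^sup>2"
    unfolding e_def using gradient_taylor_bound[of x h] \<open>L \<le> M\<close>
    by (meson divide_right_mono mult_right_mono order_trans zero_le_power2 zero_le_numeral)
  ultimately show ?thesis by linarith
qed

lemma cubic_step_lambda_min:
  assumes "L \<le> M" and H_sym: "symmetric_matrix H"
    and second_order: "\<And>z. 0 \<le> z \<bullet> (H *v z) + M * norm h / 2 * (norm z)\<^sup>2"
  shows "- lambda_min (Hf (x + h)) \<le> 3 * M * norm h / 2 + spec_norm (Hf x - H)"
proof -
  define l where "l = lambda_min (Hf (x + h))"
  obtain v where "v \<noteq> 0" and eig: "Hf (x + h) *v v = l *\<^sub>R v"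
    using lambda_min_in_eigenvalues[OF symmetric_hessian] unfolding l_def eigenvalues_def by auto
  have "l * (norm v)\<^sup>2 = v \<bullet> (H *v v) + v \<bullet> ((Hf x - H) *v v) + v \<bullet> ((Hf (x + h) - Hf x) *v v)"
    using eig by (simp add: power2_norm_eq_inner matrix_vector_mult_diff_rdistrib inner_diff_right)
  moreover have "- (M * norm h / 2 * (norm v)\<^sup>2) \<le> v \<bullet> (H *v v)"
    using second_order[of v] by linarith
  moreover have "- (spec_norm (Hf x - H) * (norm v)\<^sup>2) \<le> v \<bullet> ((Hf x - H) *v v)"
    using abs_quadratic_le_spec_norm[OF symmetric_matrix_diff[OF symmetric_hessian[of x] H_sym], of v]
    by linarith
  moreover have "- (M * norm h * (norm v)\<^sup>2) \<le> v \<bullet> ((Hf (x + h) - Hf x) *v v)"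
  proof -
    have "\<bar>v \<bullet> ((Hf (x + h) - Hf x) *v v)\<bar> \<le> spec_norm (Hf (x + h) - Hf x) * (norm v)\<^sup>2"
      by (intro abs_quadratic_le_spec_norm symmetric_matrix_diff symmetric_hessian)
    also have "\<dots> \<le> M * norm h * (norm v)\<^sup>2"
      using hessian_lipschitz[of "x + h" x] mult_right_mono[OF \<open>L \<le> M\<close> norm_ge_zero[of h]]
      by (intro mult_right_mono) simp_all
    finally show ?thesis by linarith
  qed
  ultimately have "(- l) * (norm v)\<^sup>2 \<le> (3 * M * norm h / 2 + spec_norm (Hf x - H)) * (norm v)\<^sup>2"
    by (simp add: algebra_simps)
  moreover have "0 < (norm v)\<^sup>2" using \<open>v \<noteq> 0\<close> by simp
  ultimately show ?thesis unfolding l_def by (rule mult_right_le_imp_le)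
qed

end

section \<open>Elementary inequalities\<close>

lemma powr_three_halves: "0 \<le> x \<Longrightarrow> x powr (3/2) = sqrt x ^ 3" for x :: real
  by (simp add: powr_half_sqrt_powr real_sqrt_power powr_realpow')

lemma cube_of_sum_le:
  fixes u v :: real
  assumes "0 \<le> u" "0 \<le> v"
  shows "(u + v) ^ 3 \<le> 4 * (u ^ 3 + v ^ 3)"
proof -
  have "4 * (u ^ 3 + v ^ 3) - (u + v) ^ 3 = 3 * (u + v) * (u - v)\<^sup>2"
    by (simp add: algebra_simps power2_eq_square power3_eq_cube)
  then show ?thesis using assms by (simp add: algebra_simps)
qed

lemma three_sq_mult_le_cubes:
  fixes a b :: real
  assumes "0 \<le> a" "0 \<le> b"
  shows "3 * a\<^sup>2 * b \<le> 2 * a ^ 3 + b ^ 3"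
proof -
  have "2 * a ^ 3 + b ^ 3 - 3 * a\<^sup>2 * b = (a - b)\<^sup>2 * (2 * a + b)"
    by (simp add: algebra_simps power2_eq_square power3_eq_cube)
  then show ?thesis using assms by (simp add: algebra_simps)
qed

lemma two_cube_le_sum_cubes:
  fixes a b q :: real
  assumes "0 \<le> a" "0 \<le> b" "q\<^sup>2 = a * b"
  shows "2 * q ^ 3 \<le> a ^ 3 + b ^ 3"
proof (rule power2_le_imp_le)
  have "(2 * q ^ 3)\<^sup>2 = 4 * (q\<^sup>2) ^ 3" by (simp add: power2_eq_square power3_eq_cube)
  also have "\<dots> = (a ^ 3 + b ^ 3)\<^sup>2 - (a ^ 3 - b ^ 3)\<^sup>2"
    using assms(3) by (simp add: power2_eq_square power3_eq_cube algebra_simps)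
  finally show "(2 * q ^ 3)\<^sup>2 \<le> (a ^ 3 + b ^ 3)\<^sup>2" by simp
qed (use assms in simp)

lemma cubic_step_growth_bound:
  fixes s r p \<eta> G l :: real
  assumes s: "0 < s" and nonneg: "0 \<le> r" "0 \<le> p" "0 \<le> \<eta>" "0 \<le> G"
    and G: "G \<le> p\<^sup>2 + \<eta> * r + s\<^sup>2 * r\<^sup>2" and l: "- l \<le> 3 * s\<^sup>2 * r / 2 + \<eta>"
  shows "max (G powr (3/2)) ((- l) ^ 3 / s ^ 3) \<le> 51/2 * s ^ 3 * r ^ 3 + 16 * p ^ 3 + 12 * \<eta> ^ 3 / s ^ 3"
proof -
  define q where "q = sqrt (\<eta> * r)"
  have q: "0 \<le> q" "q\<^sup>2 = (\<eta> / s) * (s * r)"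
    using s nonneg by (simp_all add: q_def)
  have "sqrt G \<le> sqrt (p\<^sup>2 + \<eta> * r + s\<^sup>2 * r\<^sup>2)"
    using G by simp
  also have "\<dots> \<le> sqrt (p\<^sup>2 + \<eta> * r) + sqrt (s\<^sup>2 * r\<^sup>2)"
    using nonneg by (intro sqrt_add_le_add_sqrt) auto
  also have "\<dots> \<le> sqrt (p\<^sup>2) + sqrt (\<eta> * r) + sqrt (s\<^sup>2 * r\<^sup>2)"
    using nonneg sqrt_add_le_add_sqrt[of "p\<^sup>2" "\<eta> * r"] by simp
  also have "\<dots> = s * r + (p + q)"
    using s nonneg by (simp add: q_def real_sqrt_mult)
  finally have "G powr (3/2) \<le> (s * r + (p + q)) ^ 3"
    using nonneg by (simp add: powr_three_halves power_mono)
  also have "\<dots> \<le> 4 * (s * r) ^ 3 + 16 * p ^ 3 + 8 * (2 * q ^ 3)"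
    using cube_of_sum_le[of "s * r" "p + q"] cube_of_sum_le[of p q] s nonneg q by simp
  also have "\<dots> \<le> 12 * (s * r) ^ 3 + 16 * p ^ 3 + 8 * (\<eta> / s) ^ 3"
    using two_cube_le_sum_cubes[of "\<eta> / s" "s * r" q] s nonneg q by simp
  finally have growth_gradient: "G powr (3/2) \<le> 12 * (s * r) ^ 3 + 16 * p ^ 3 + 8 * (\<eta> / s) ^ 3" .
  have "- l / s \<le> 3/2 * (s * r) + \<eta> / s"
    using divide_right_mono[OF l, of s] s by (simp add: field_simps power2_eq_square)
  then have "(- l / s) ^ 3 \<le> (3/2 * (s * r) + \<eta> / s) ^ 3"
    by (rule power_mono_odd[rotated]) simp
  then have "(- l) ^ 3 / s ^ 3 \<le> (3/2 * (s * r) + \<eta> / s) ^ 3"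
    by (simp only: power_divide)
  also have "\<dots> \<le> 4 * ((3/2 * (s * r)) ^ 3 + (\<eta> / s) ^ 3)"
    using s nonneg by (intro cube_of_sum_le) simp_all
  also have "\<dots> = 27/2 * (s * r) ^ 3 + 4 * (\<eta> / s) ^ 3"
    by (simp add: power_mult_distrib power3_eq_cube)
  finally have growth_curvature: "(- l) ^ 3 / s ^ 3 \<le> 27/2 * (s * r) ^ 3 + 4 * (\<eta> / s) ^ 3" .
  have "0 \<le> (s * r) ^ 3" "0 \<le> p ^ 3" "0 \<le> (\<eta> / s) ^ 3"
    using s nonneg by simp_all
  then have "G powr (3/2) \<le> 51/2 * (s * r) ^ 3 + 16 * p ^ 3 + 12 * (\<eta> / s) ^ 3"
    and "(- l) ^ 3 / s ^ 3 \<le> 51/2 * (s * r) ^ 3 + 16 * p ^ 3 + 12 * (\<eta> / s) ^ 3"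
    using growth_gradient growth_curvature by linarith+
  then show ?thesis by (simp add: power_mult_distrib power_divide)
qed

lemma cubic_step_budget:
  fixes s r p \<eta> \<mu> :: real
  assumes s: "0 < s" and nonneg: "0 \<le> r" "0 \<le> p" "0 \<le> \<eta>"
    and \<mu>: "\<mu> \<le> 51/2 * s ^ 3 * r ^ 3 + 16 * p ^ 3 + 12 * \<eta> ^ 3 / s ^ 3"
  shows "\<mu> / (1008 * s) + s\<^sup>2 * r ^ 3 / 72 - 4 * p ^ 3 / s - 73 * \<eta> ^ 3 / s ^ 4
           \<le> s\<^sup>2 * r ^ 3 / 12 - p\<^sup>2 * r - \<eta> * r\<^sup>2 / 2"
proof -
  (* Young's inequality with weights making the s\<^sup>2 r\<^sup>3 coefficients sum to 51/2016 + 1/72 + 1/75 + 1/36 < 1/12. *)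
  have "p\<^sup>2 * r \<le> 10/3 * (p ^ 3 / s) + s\<^sup>2 * r ^ 3 / 75"
    using three_sq_mult_le_cubes[of "5 * p" "s * r"] s nonneg
    by (simp add: field_simps power2_eq_square power3_eq_cube)
  moreover have "\<eta> * r\<^sup>2 / 2 \<le> s\<^sup>2 * r ^ 3 / 36 + 24 * (\<eta> ^ 3 / s ^ 4)"
    using three_sq_mult_le_cubes[of "s\<^sup>2 * r" "12 * \<eta>"] s nonneg
    by (simp add: field_simps power2_eq_square power3_eq_cube eval_nat_numeral)
  moreover have "\<mu> / (1008 * s) \<le> 51/2016 * (s\<^sup>2 * r ^ 3) + 1/63 * (p ^ 3 / s) + 1/84 * (\<eta> ^ 3 / s ^ 4)"
  proof -
    have "\<mu> / (1008 * s) \<le> (51/2 * s ^ 3 * r ^ 3 + 16 * p ^ 3 + 12 * \<eta> ^ 3 / s ^ 3) / (1008 * s)"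
      using \<mu> s by (simp add: divide_right_mono)
    also have "\<dots> = 51/2016 * (s\<^sup>2 * r ^ 3) + 1/63 * (p ^ 3 / s) + 1/84 * (\<eta> ^ 3 / s ^ 4)"
      using s by (simp add: field_simps eval_nat_numeral)
    finally show ?thesis .
  qed
  moreover have "0 \<le> p ^ 3 / s" "0 \<le> \<eta> ^ 3 / s ^ 4" "0 \<le> s\<^sup>2 * r ^ 3"
    using s nonneg by simp_all
  ultimately show ?thesis by (simp add: field_simps)
qed

lemma cubic_step_estimate:
  fixes M r a \<eta> D G l :: real
  assumes M: "0 < M" and nonneg: "0 \<le> r" "0 \<le> a" "0 \<le> \<eta>" "0 \<le> G"
    and decrease: "M * r ^ 3 / 12 - a * r - \<eta> * r\<^sup>2 / 2 \<le> D"
    and gradient: "G \<le> a + \<eta> * r + M * r\<^sup>2"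
    and curvature: "- l \<le> 3 * M * r / 2 + \<eta>"
  shows "max (G powr (3/2)) ((- l) ^ 3 / M powr (3/2)) / (1008 * sqrt M) + M * r ^ 3 / 72
           - 4 * a powr (3/2) / sqrt M - 73 * \<eta> ^ 3 / M\<^sup>2 \<le> D"
proof -
  define s p where "s = sqrt M" and "p = sqrt a"
  have s: "0 < s" "M = s\<^sup>2" "M powr (3/2) = s ^ 3"
    using M by (simp_all add: s_def powr_three_halves)
  then have "M\<^sup>2 = s ^ 4"
    by (simp flip: power_mult)
  note s = s this
  have p: "0 \<le> p" "a = p\<^sup>2" "a powr (3/2) = p ^ 3"
    using nonneg by (simp_all add: p_def powr_three_halves)
  have "max (G powr (3/2)) ((- l) ^ 3 / s ^ 3) \<le> 51/2 * s ^ 3 * r ^ 3 + 16 * p ^ 3 + 12 * \<eta> ^ 3 / s ^ 3"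
    using gradient curvature unfolding s p by (intro cubic_step_growth_bound) (use s p nonneg in auto)
  from cubic_step_budget[OF s(1) nonneg(1) p(1) nonneg(3) this]
  have "max (G powr (3/2)) ((- l) ^ 3 / s ^ 3) / (1008 * s) + s\<^sup>2 * r ^ 3 / 72 - 4 * p ^ 3 / s
          - 73 * \<eta> ^ 3 / s ^ 4 \<le> D"
    using decrease unfolding s(2) p(2) by linarith
  then show ?thesis
    unfolding s(3,4) p(3) s_def[symmetric] unfolding s(2) .
qed

theorem mainTheorem1:
  fixes f :: "real^'n \<Rightarrow> real"
    and gradf :: "real^'n \<Rightarrow> real^'n"
    and Hf :: "real^'n \<Rightarrow> real^'n^'n"
    and L M :: real
    and x g xp :: "real^'n"
    and H :: "real^'n^'n"
  assumes f_deriv: "\<And>y. (f has_derivative (\<lambda>h. gradf y \<bullet> h)) (at y)"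
    and grad_deriv: "\<And>y. (gradf has_derivative (\<lambda>h. Hf y *v h)) (at y)"
    and hess_lip: "\<And>y z. spec_norm (Hf y - Hf z) \<le> L * norm (y - z)"
    and H_sym: "symmetric_matrix H"
    and M_pos: "M > 0"
    and M_ge: "M \<ge> L"
    and xp_min: "\<And>y. Omega M g H xp x \<le> Omega M g H y x"
  shows "f x - f xp \<ge> mu gradf Hf M xp / (1008 * sqrt M) + M * norm (x - xp) ^ 3 / 72
           - 4 * norm (gradf x - g) powr (3/2) / sqrt M
           - 73 * spec_norm (Hf x - H) ^ 3 / M\<^sup>2"
proof -
  interpret lipschitz_hessian f gradf Hf L
    using f_deriv grad_deriv hess_lip by unfold_locales
  define h where "h = xp - x"
  have min: "cubic_model M g H h \<le> cubic_model M g H v" for v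
    using xp_min[of "x + v"] by (simp add: h_def Omega_eq_cubic_model)
  note stationary = cubic_model_minimizer_stationary[OF H_sym min]
  note second_order = cubic_model_minimizer_second_order[OF H_sym min]
  have "xp = x + h" "norm (x - xp) = norm h"
    by (simp_all add: h_def norm_minus_commute)
  then show ?thesis
    unfolding mu_def
    using cubic_step_estimate[OF M_pos norm_ge_zero norm_ge_zero
        spec_norm_nonneg[OF symmetric_matrix_diff[OF symmetric_hessian H_sym]] norm_ge_zero
        cubic_step_decrease[OF M_ge H_sym stationary second_order]
        cubic_step_gradient[OF M_ge H_sym stationary]
        cubic_step_lambda_min[OF M_ge H_sym second_order]]
    by simp
qed

end
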